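(* Let $W$ be a positive real-valued càdlàg stochastic process on $[0,T]$ with finite $p$-variation almost surely ($p\ge1$), and suppose that almost surely the range of $W$ on $[0,T]$ is contained in a compact interval $[m,M]\subset(0,\infty)$. Let $n:=\lfloor p\rfloor$. Then almost surely the RRS limit $$\int_0^T\frac1{W_t}\,d\mathbf W_t:=\mathrm{RRS}\text{-}\lim_\Pi\sum_{[t_i,t_{i+1}]\in\Pi}\sum_{k=1}^n\frac{(-1)^{k-1}}{k}\Big(\frac{W_{t_{i+1}}-W_{t_i}}{W_{t_i}}\Big)^k$$ exists and $$\log W_T-\log W_0=\int_0^T\frac1{W_t}\,d\mathbf W_t+\sum_{0<t\le T}\Big(\log\Big(1+\frac{\Delta^-_tW}{W_{t-}}\Big)-\sum_{k=1}^n\frac{(-1)^{k-1}}{k}\Big(\frac{\Delta^-_tW}{W_{t-}}\Big)^k\Big),$$ the series converging absolutely.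
   Context: $p$-variation: $\|W\|_{p\text{-var};[0,T]}:=(\sup_\Pi\sum|W_{t_{i+1}}-W_{t_i}|^p)^{1/p}$ over partitions $\Pi$ of $[0,T]$. $W_{t-}:=\lim_{u\uparrow t}W_u$, $\Delta^-_tW:=W_t-W_{t-}$. RRS convergence: sums $S(\Pi)$ converge to $K$ if for every $\varepsilon>0$ there is a partition $\Pi_\varepsilon$ with $|S(\Pi)-K|<\varepsilon$ for every partition $\Pi\supset\Pi_\varepsilon$. *)

theory Defs
  imports "HOL-Probability.Probability"
begin

definition is_partition :: "real \<Rightarrow> real set \<Rightarrow> bool" where
  "is_partition T P \<longleftrightarrow> finite P \<and> P \<subseteq> {0..T} \<and> 0 \<in> P \<and> T \<in> P"

definition nxt :: "real set \<Rightarrow> real \<Rightarrow> real" where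
  "nxt P t = Min {s \<in> P. t < s}"

definition psum :: "real \<Rightarrow> real set \<Rightarrow> (real \<Rightarrow> real \<Rightarrow> real) \<Rightarrow> real" where
  "psum T P f = (\<Sum>t\<in>P - {T}. f t (nxt P t))"

definition finite_pvar :: "real \<Rightarrow> real \<Rightarrow> (real \<Rightarrow> real) \<Rightarrow> bool" where
  "finite_pvar p T W \<longleftrightarrow>
     bdd_above {psum T P (\<lambda>s t. \<bar>W t - W s\<bar> powr p) | P. is_partition T P}"

definition pvar :: "real \<Rightarrow> real \<Rightarrow> (real \<Rightarrow> real) \<Rightarrow> real" where
  "pvar p T W = (SUP P\<in>{P. is_partition T P}. psum T P (\<lambda>s t. \<bar>W t - W s\<bar> powr p)) powr (1/p)"

definition cadlag_on :: "real \<Rightarrow> (real \<Rightarrow> real) \<Rightarrow> bool" where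
  "cadlag_on T W \<longleftrightarrow>
     (\<forall>t\<in>{0..<T}. (W \<longlongrightarrow> W t) (at_right t)) \<and>
     (\<forall>t\<in>{0<..T}. \<exists>l. (W \<longlongrightarrow> l) (at_left t))"

definition left_lim :: "(real \<Rightarrow> real) \<Rightarrow> real \<Rightarrow> real" where
  "left_lim W t = Lim (at_left t) W"

definition jump :: "(real \<Rightarrow> real) \<Rightarrow> real \<Rightarrow> real" where
  "jump W t = W t - left_lim W t"

definition rrs_converges :: "real \<Rightarrow> (real set \<Rightarrow> real) \<Rightarrow> real \<Rightarrow> bool" where
  "rrs_converges T S K \<longleftrightarrow>
     (\<forall>\<epsilon>>0. \<exists>P\<epsilon>. is_partition T P\<epsilon> \<and>
        (\<forall>P. is_partition T P \<and> P\<epsilon> \<subseteq> P \<longrightarrow> \<bar>S P - K\<bar> < \<epsilon>))"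

definition logser :: "nat \<Rightarrow> real \<Rightarrow> real" where
  "logser n x = (\<Sum>k=1..n. (-1) ^ (k - 1) / real k * x ^ k)"

definition jump_corr :: "nat \<Rightarrow> (real \<Rightarrow> real) \<Rightarrow> real \<Rightarrow> real" where
  "jump_corr n W t = ln (1 + jump W t / left_lim W t) - logser n (jump W t / left_lim W t)"

end

theory Submission
  imports Defs
begin

(* On a partition, ln W_T - ln W_0 telescopes into the sum of ln (1 + x_i) over the relative
   increments x_i = (W_{t_{i+1}} - W_{t_i}) / W_{t_i}, so it differs from the truncated log sums by
   the sum of the Taylor remainders R_n(x_i) = ln (1 + x_i) - logser n x_i.  These remainder sums
   RRS-converge to the sum of R_n(Delta W_t / W_{t-}) over the jumps: since |R_n(x)| = O(|x|^(n+1))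
   and n + 1 > p, increments below delta contribute o(1) times the p-variation as delta -> 0, and so
   do the jumps below delta.  The finitely many remaining jump times, together with points just
   before them, are put into the partition; the interval ending at such a jump then starts where
   W is already close to W_{t-}, so its remainder is close to the jump remainder. *)

section \<open>Taylor remainder of the logarithm\<close>

definition logser_rem :: "nat \<Rightarrow> real \<Rightarrow> real" where
  "logser_rem n x = ln (1 + x) - logser n x"

lemma logser_rem_0 [simp]: "logser_rem n 0 = 0"
  by (simp add: logser_rem_def logser_def)

lemma has_real_derivative_logser:
  "(logser n has_real_derivative (\<Sum>k=1..n. (-x) ^ (k - 1))) (at x)"
proof -
  have "(logser n has_real_derivative (\<Sum>k=1..n. (-1) ^ (k - 1) / real k * (real k * x ^ (k - 1)))) (at x)"
    unfolding logser_def [abs_def] by (intro DERIV_sum DERIV_cmult) (auto intro!: derivative_eq_intros)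
  moreover have "(\<Sum>k=1..n. (-1) ^ (k - 1) / real k * (real k * x ^ (k - 1))) = (\<Sum>k=1..n. (-x) ^ (k - 1))"
    by (intro sum.cong refl) (simp add: power_minus [of x])
  ultimately show ?thesis by simp
qed

lemma has_real_derivative_logser_rem:
  assumes "0 < 1 + x"
  shows "(logser_rem n has_real_derivative ((-x) ^ n / (1 + x))) (at x)"
proof -
  have geometric: "(\<Sum>k=1..n. (-x) ^ (k - 1)) * (1 + x) = 1 - (-x) ^ n"
    by (induction n) (auto simp: algebra_simps)
  have "(logser_rem n has_real_derivative (1 / (1 + x) - (\<Sum>k=1..n. (-x) ^ (k - 1)))) (at x)"
    unfolding logser_rem_def [abs_def] using assms
    by (intro DERIV_diff has_real_derivative_logser) (auto intro!: derivative_eq_intros)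
  moreover have "1 / (1 + x) - (\<Sum>k=1..n. (-x) ^ (k - 1)) = (-x) ^ n / (1 + x)"
    using geometric assms by (simp add: field_simps)
  ultimately show ?thesis by simp
qed

lemma logser_rem_lipschitz:
  fixes x y a :: real
  assumes "0 < a" "a - 1 \<le> x" "a - 1 \<le> y"
  shows "\<bar>logser_rem n x - logser_rem n y\<bar> \<le> \<bar>x - y\<bar> * max \<bar>x\<bar> \<bar>y\<bar> ^ n / a"
proof -
  have ordered: "\<bar>logser_rem n v - logser_rem n u\<bar> \<le> \<bar>v - u\<bar> * max \<bar>u\<bar> \<bar>v\<bar> ^ n / a"
    if uv: "a - 1 \<le> u" "u < v" for u v
  proof -
    obtain z where z: "u < z" "z < v"
      and mvt: "logser_rem n v - logser_rem n u = (v - u) * ((-z) ^ n / (1 + z))"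
      using MVT2 [OF \<open>u < v\<close>, of "logser_rem n" "\<lambda>z. (-z) ^ n / (1 + z)"]
        has_real_derivative_logser_rem assms(1) uv by force
    have "\<bar>(-z) ^ n / (1 + z)\<bar> = \<bar>z\<bar> ^ n / (1 + z)"
      using z assms(1) uv by (simp add: power_abs)
    also have "\<dots> \<le> max \<bar>u\<bar> \<bar>v\<bar> ^ n / a"
      using z assms(1) uv by (intro frac_le power_mono) auto
    finally have "\<bar>v - u\<bar> * \<bar>(-z) ^ n / (1 + z)\<bar> \<le> \<bar>v - u\<bar> * (max \<bar>u\<bar> \<bar>v\<bar> ^ n / a)"
      by (rule mult_left_mono) simp
    then show ?thesis
      unfolding mvt abs_mult by simp
  qed
  show ?thesis
    using ordered [of x y] ordered [of y x] assms
    by (cases x y rule: linorder_cases) (auto simp: abs_minus_commute max.commute)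
qed

lemma logser_rem_bound:
  fixes x a :: real
  assumes "0 < a" "a \<le> 1" "a - 1 \<le> x"
  shows "\<bar>logser_rem n x\<bar> \<le> \<bar>x\<bar> ^ Suc n / a"
  using logser_rem_lipschitz [OF assms(1,3), of 0 n] assms by (cases "x = 0") (auto simp: max_def)

lemma increment_ratio_bounds:
  fixes m Mx u w :: real
  assumes m: "0 < m" and u: "m \<le> u" "u \<le> Mx" and w: "m \<le> w" "w \<le> Mx"
  shows "m/Mx - 1 \<le> (w-u)/u" "\<bar>(w-u)/u\<bar> \<le> Mx/m"
proof -
  have ratio: "(w-u)/u = w/u - 1" using m u by (simp add: field_simps)
  have "m/Mx \<le> w/u" "w/u \<le> Mx/m" using m u w by (auto intro!: frac_le)
  moreover have "0 \<le> w/u" "1 \<le> Mx/m" using m u w by auto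
  ultimately show "m/Mx - 1 \<le> (w-u)/u" "\<bar>(w-u)/u\<bar> \<le> Mx/m" unfolding ratio by auto
qed

lemma logser_rem_increment_ratio_le:
  fixes m Mx u w \<delta> p :: real
  assumes m: "0 < m" and u: "m \<le> u" "u \<le> Mx" and w: "m \<le> w" "w \<le> Mx"
    and d: "\<bar>w - u\<bar> \<le> \<delta>" and p: "0 < p" "p < real n + 1"
  shows "\<bar>logser_rem n ((w-u)/u)\<bar> \<le> (\<delta>/m) powr (real n + 1 - p) / ((m/Mx) * m powr p) * \<bar>w-u\<bar> powr p"
proof -
  define a where "a = m/Mx"
  define x where "x = (w-u)/u"
  have u0: "0 < u" using m u by simp
  have a: "0 < a" "a \<le> 1" "a - 1 \<le> x"
    using m u increment_ratio_bounds [OF m u w] unfolding a_def x_def by auto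
  have split_power: "\<bar>x\<bar> ^ Suc n = \<bar>x\<bar> powr p * \<bar>x\<bar> powr (real n + 1 - p)"
    using p by (cases "x = 0") (simp_all add: powr_realpow [symmetric] powr_add [symmetric] powr_mult_base add.commute)
  have "\<bar>x\<bar> = \<bar>w-u\<bar>/u" unfolding x_def using u0 by simp
  then have x_le: "\<bar>x\<bar> \<le> \<delta>/m" and x_powr: "\<bar>x\<bar> powr p \<le> \<bar>w-u\<bar> powr p / m powr p"
    using d m u p by (auto intro!: frac_le divide_left_mono powr_mono2 simp: powr_divide)
  have "\<bar>logser_rem n x\<bar> \<le> \<bar>x\<bar> ^ Suc n / a"
    by (rule logser_rem_bound [OF a])
  also have "\<dots> \<le> (\<bar>w-u\<bar> powr p / m powr p) * (\<delta>/m) powr (real n + 1 - p) / a"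
    unfolding split_power using a x_le x_powr p
    by (intro divide_right_mono mult_mono powr_mono2) auto
  also have "\<dots> = (\<delta>/m) powr (real n + 1 - p) / ((m/Mx) * m powr p) * \<bar>w-u\<bar> powr p"
    unfolding a_def by (simp add: field_simps)
  finally show ?thesis unfolding x_def .
qed

lemma logser_rem_increment_ratio_lipschitz:
  fixes m Mx u w L :: real
  assumes m: "0 < m" and u: "m \<le> u" "u \<le> Mx" and w: "m \<le> w" "w \<le> Mx" and L: "m \<le> L" "L \<le> Mx"
  shows "\<bar>logser_rem n ((w-u)/u) - logser_rem n ((w-L)/L)\<bar> \<le> Mx/m^2 * ((Mx/m)^n / (m/Mx)) * \<bar>L - u\<bar>"
proof -
  have a: "0 < m/Mx" using m u by auto
  note ratio_u = increment_ratio_bounds [OF m u w] and ratio_L = increment_ratio_bounds [OF m L w]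
  have "(w-u)/u - (w-L)/L = w * (L - u) / (u * L)" using m u L by (simp add: field_simps)
  then have "\<bar>(w-u)/u - (w-L)/L\<bar> = w * \<bar>L - u\<bar> / (u * L)" using m u w L by (simp add: abs_mult)
  also have "\<dots> \<le> Mx * \<bar>L - u\<bar> / (m * m)"
    using m u w L by (intro frac_le mult_mono) auto
  finally have diff_le: "\<bar>(w-u)/u - (w-L)/L\<bar> \<le> Mx/m^2 * \<bar>L - u\<bar>" by (simp add: power2_eq_square)
  have max_le: "max \<bar>(w-u)/u\<bar> \<bar>(w-L)/L\<bar> ^ n \<le> (Mx/m)^n"
    using ratio_u ratio_L by (intro power_mono) (auto simp: le_max_iff_disj)
  have "\<bar>logser_rem n ((w-u)/u) - logser_rem n ((w-L)/L)\<bar>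
          \<le> \<bar>(w-u)/u - (w-L)/L\<bar> * max \<bar>(w-u)/u\<bar> \<bar>(w-L)/L\<bar> ^ n / (m/Mx)"
    using ratio_u ratio_L by (intro logser_rem_lipschitz [OF a]) auto
  also have "\<dots> \<le> (Mx/m^2 * \<bar>L - u\<bar>) * (Mx/m) ^ n / (m/Mx)"
    using a m diff_le max_le by (intro divide_right_mono mult_mono) (auto simp: le_max_iff_disj)
  finally show ?thesis by (simp add: mult_ac)
qed

section \<open>Partitions\<close>

lemma is_partition_less_end: "is_partition T P \<Longrightarrow> s \<in> P - {T} \<Longrightarrow> s < T"
  unfolding is_partition_def by force

lemma is_partition_nonneg: "is_partition T P \<Longrightarrow> s \<in> P \<Longrightarrow> 0 \<le> s"
  unfolding is_partition_def by force

lemma nxt_partition: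
  assumes "is_partition T P" "s \<in> P" "s < T"
  shows "nxt P s \<in> P" "s < nxt P s" "\<And>r. r \<in> P \<Longrightarrow> s < r \<Longrightarrow> nxt P s \<le> r"
proof -
  have f: "finite {r\<in>P. s<r}" and ne: "{r\<in>P. s<r} \<noteq> {}"
    using assms unfolding is_partition_def by auto
  have "nxt P s \<in> {r\<in>P. s<r}" unfolding nxt_def using Min_in[OF f ne] .
  then show "nxt P s \<in> P" "s < nxt P s" by auto
  show "\<And>r. r \<in> P \<Longrightarrow> s < r \<Longrightarrow> nxt P s \<le> r"
    unfolding nxt_def using f by (intro Min_le) auto
qed

lemma nxt_eqI:
  assumes "finite P" "v \<in> P" "s < v" "\<And>r. r \<in> P \<Longrightarrow> s < r \<Longrightarrow> v \<le> r"
  shows "nxt P s = v"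
  unfolding nxt_def using assms by (intro Min_eqI) auto

lemma inj_on_nxt:
  assumes "is_partition T P"
  shows "inj_on (nxt P) (P - {T})"
proof (rule inj_onI)
  fix x y assume x: "x \<in> P - {T}" and y: "y \<in> P - {T}" and e: "nxt P x = nxt P y"
  have xT: "x < T" and yT: "y < T" using is_partition_less_end[OF assms] x y by auto
  show "x = y"
  proof (cases x y rule: linorder_cases)
    case less
    have "nxt P x \<le> y" using nxt_partition(3)[OF assms _ xT, of y] x y less by auto
    moreover have "y < nxt P y" using nxt_partition(2)[OF assms _ yT] y by auto
    ultimately show ?thesis using e by simp
  next
    case greater
    have "nxt P y \<le> x" using nxt_partition(3)[OF assms _ yT, of x] x y greater by auto
    moreover have "x < nxt P x" using nxt_partition(2)[OF assms _ xT] x by auto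
    ultimately show ?thesis using e by simp
  qed simp
qed

lemma ex_nxt_eq:
  assumes "is_partition T P" "v \<in> P" "0 < v"
  shows "\<exists>s\<in>P - {T}. nxt P s = v"
proof -
  have f: "finite {r\<in>P. r<v}" and ne: "{r\<in>P. r<v} \<noteq> {}"
    using assms unfolding is_partition_def by auto
  define s where "s = Max {r\<in>P. r<v}"
  have s: "s \<in> P" "s < v" using Max_in[OF f ne] unfolding s_def by auto
  have "v \<le> T" using assms unfolding is_partition_def by auto
  then have "s \<noteq> T" using s by auto
  moreover have "nxt P s = v"
  proof (rule nxt_eqI)
    show "finite P" using assms unfolding is_partition_def by auto
    fix r assume r: "r \<in> P" "s < r"
    show "v \<le> r"
    proof (rule ccontr)
      assume "\<not> v \<le> r"
      then have "r \<le> s" unfolding s_def using f r by (intro Max_ge) auto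
      then show False using r by simp
    qed
  qed (use assms s in auto)
  ultimately show ?thesis using s by auto
qed

lemma bij_betw_nxt_preimage:
  assumes P: "is_partition T P" and J: "J \<subseteq> P - {0}"
  shows "bij_betw (nxt P) {s \<in> P - {T}. nxt P s \<in> J} J"
proof (rule bij_betw_imageI)
  show "inj_on (nxt P) {s \<in> P - {T}. nxt P s \<in> J}"
    using inj_on_nxt [OF P] by (rule inj_on_subset) auto
  have "J \<subseteq> nxt P ` {s \<in> P - {T}. nxt P s \<in> J}"
  proof
    fix v assume v: "v \<in> J"
    then have "v \<in> P" "0 < v" using J is_partition_nonneg [OF P] by (auto simp: less_le)
    then obtain s where "s \<in> P - {T}" "nxt P s = v" using ex_nxt_eq [OF P] by blast
    then show "v \<in> nxt P ` {s \<in> P - {T}. nxt P s \<in> J}" using v by force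
  qed
  then show "nxt P ` {s \<in> P - {T}. nxt P s \<in> J} = J" by auto
qed

lemma bij_betw_nxt:
  assumes "is_partition T P"
  shows "bij_betw (nxt P) (P - {T}) (P - {0})"
proof -
  have "nxt P s \<in> P - {0}" if "s \<in> P - {T}" for s
    using nxt_partition(1,2) [OF assms _ is_partition_less_end [OF assms that]] that
      is_partition_nonneg [OF assms, of s] by auto
  then have "{s \<in> P - {T}. nxt P s \<in> P - {0}} = P - {T}" by auto
  then show ?thesis using bij_betw_nxt_preimage [OF assms, of "P - {0}"] by simp
qed

lemma psum_telescope:
  assumes "is_partition T P" "0 < T"
  shows "psum T P (\<lambda>s t. f t - f s) = f T - f 0"
proof -
  have fin: "finite P" and T: "T \<in> P" and z: "0 \<in> P"
    using assms unfolding is_partition_def by auto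
  have "psum T P (\<lambda>s t. f t - f s) = (\<Sum>s\<in>P - {T}. f (nxt P s)) - (\<Sum>s\<in>P - {T}. f s)"
    unfolding psum_def by (simp add: sum_subtractf)
  also have "(\<Sum>s\<in>P - {T}. f (nxt P s)) = (\<Sum>v\<in>P - {0}. f v)"
    using sum.reindex_bij_betw [OF bij_betw_nxt [OF assms(1)], of f] by simp
  also have "(\<Sum>v\<in>P - {0}. f v) = f T + (\<Sum>v\<in>P - {0} - {T}. f v)"
    using fin T assms(2) by (subst sum.remove[of _ T]) auto
  also have "(\<Sum>s\<in>P - {T}. f s) = f 0 + (\<Sum>v\<in>P - {T} - {0}. f v)"
    using fin z assms(2) by (subst sum.remove[of _ 0]) auto
  also have "P - {T} - {0} = P - {0} - {T}" by auto
  finally show ?thesis by simp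
qed

lemma psum_le_pvar_powr:
  assumes "finite_pvar p T W" "0 < p" "is_partition T P"
  shows "psum T P (\<lambda>s t. \<bar>W t - W s\<bar> powr p) \<le> pvar p T W powr p"
proof -
  define S where "S = (SUP P\<in>{P. is_partition T P}. psum T P (\<lambda>s t. \<bar>W t - W s\<bar> powr p))"
  have "psum T P (\<lambda>s t. \<bar>W t - W s\<bar> powr p) \<le> S"
    unfolding S_def using assms(1,3)
    by (intro cSUP_upper) (auto simp: finite_pvar_def image_def setcompr_eq_image)
  moreover have "0 \<le> psum T P (\<lambda>s t. \<bar>W t - W s\<bar> powr p)"
    unfolding psum_def by (intro sum_nonneg) auto
  ultimately show ?thesis
    using assms(2) by (simp add: pvar_def S_def [symmetric] powr_powr)
qed

lemma rrs_converges_diff_const: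
  assumes "rrs_converges T S K" "\<And>P. is_partition T P \<Longrightarrow> S' P = c - S P"
  shows "rrs_converges T S' (c - K)"
  unfolding rrs_converges_def
proof (intro allI impI)
  fix \<epsilon> :: real assume "0 < \<epsilon>"
  then obtain P\<epsilon> where P\<epsilon>: "is_partition T P\<epsilon>" "\<forall>P. is_partition T P \<and> P\<epsilon> \<subseteq> P \<longrightarrow> \<bar>S P - K\<bar> < \<epsilon>"
    using assms(1) unfolding rrs_converges_def by blast
  show "\<exists>P\<epsilon>. is_partition T P\<epsilon> \<and> (\<forall>P. is_partition T P \<and> P\<epsilon> \<subseteq> P \<longrightarrow> \<bar>S' P - (c - K)\<bar> < \<epsilon>)"
  proof (intro exI conjI allI impI)
    fix P assume P: "is_partition T P \<and> P\<epsilon> \<subseteq> P"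
    then have "\<bar>S P - K\<bar> < \<epsilon>" using P\<epsilon>(2) by blast
    moreover have "S' P = c - S P" using P assms(2) by blast
    ultimately show "\<bar>S' P - (c - K)\<bar> < \<epsilon>" by linarith
  qed (rule P\<epsilon>(1))
qed

section \<open>Cadlag paths\<close>

definition small_increments :: "(real \<Rightarrow> real) \<Rightarrow> real \<Rightarrow> real \<Rightarrow> real set \<Rightarrow> bool" where
  "small_increments W \<delta> \<tau> P \<longleftrightarrow>
     (\<forall>x y. 0 \<le> x \<longrightarrow> x < y \<longrightarrow> y \<le> \<tau> \<longrightarrow> {x<..y} \<inter> P = {} \<longrightarrow> \<bar>W y - W x\<bar> < \<delta>)"

lemma small_incrementsD:
  "small_increments W \<delta> \<tau> P \<Longrightarrow> 0 \<le> x \<Longrightarrow> x < y \<Longrightarrow> y \<le> \<tau> \<Longrightarrow> {x<..y} \<inter> P = {} \<Longrightarrow> \<bar>W y - W x\<bar> < \<delta>"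
  unfolding small_increments_def by blast

lemma small_increments_mono:
  "small_increments W \<delta> \<tau> P \<Longrightarrow> P \<subseteq> Q \<Longrightarrow> \<tau>' \<le> \<tau> \<Longrightarrow> small_increments W \<delta> \<tau>' Q"
  unfolding small_increments_def by (meson disjoint_iff order_trans subsetD)

lemma small_increments_extend_right:
  assumes "(W \<longlongrightarrow> W \<tau>) (at_right \<tau>)" "0 < \<delta>" "small_increments W \<delta> \<tau> P"
  shows "\<exists>h>0. small_increments W \<delta> (\<tau> + h) (insert \<tau> P)"
proof -
  have "eventually (\<lambda>y. dist (W y) (W \<tau>) < \<delta>/2) (at_right \<tau>)"
    using assms(1,2) by (intro tendstoD) auto
  then obtain b where b: "\<tau> < b" "\<And>y. \<tau> < y \<Longrightarrow> y < b \<Longrightarrow> \<bar>W y - W \<tau>\<bar> < \<delta>/2"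
    unfolding eventually_at_right_field dist_real_def by auto
  have near: "\<bar>W y - W \<tau>\<bar> < \<delta>/2" if "\<tau> \<le> y" "y < b" for y
    using b(2) [of y] assms(2) that by (cases "y = \<tau>") auto
  have "small_increments W \<delta> (\<tau> + (b - \<tau>)/2) (insert \<tau> P)"
    unfolding small_increments_def
  proof (intro allI impI)
    fix x y assume xy: "0 \<le> x" "x < y" "y \<le> \<tau> + (b - \<tau>)/2" "{x<..y} \<inter> insert \<tau> P = {}"
    show "\<bar>W y - W x\<bar> < \<delta>"
    proof (cases "y \<le> \<tau>")
      case True
      then show ?thesis using assms(3) xy unfolding small_increments_def by auto
    next
      case False
      have "y < b" using xy(3) b(1) by (simp add: field_simps)
      with False have "\<tau> \<le> x" "y < b" using xy by auto
      then have "\<bar>W x - W \<tau>\<bar> < \<delta>/2" "\<bar>W y - W \<tau>\<bar> < \<delta>/2" using near xy by auto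
      then show ?thesis by linarith
    qed
  qed
  then show ?thesis using b(1) by (intro exI [of _ "(b - \<tau>)/2"]) auto
qed

lemma small_increments_extend_left:
  assumes "(W \<longlongrightarrow> L) (at_left \<sigma>)" "0 < \<delta>"
  shows "\<exists>b<\<sigma>. \<forall>\<tau> P. b < \<tau> \<longrightarrow> \<tau> < \<sigma> \<longrightarrow> small_increments W \<delta> \<tau> P \<longrightarrow>
           small_increments W \<delta> \<sigma> (P \<union> {\<tau>, \<sigma>})"
proof -
  have "eventually (\<lambda>y. dist (W y) L < \<delta>/2) (at_left \<sigma>)"
    using assms by (intro tendstoD) auto
  then obtain b where b: "b < \<sigma>" "\<And>y. b < y \<Longrightarrow> y < \<sigma> \<Longrightarrow> \<bar>W y - L\<bar> < \<delta>/2"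
    unfolding eventually_at_left_field dist_real_def by auto
  have "small_increments W \<delta> \<sigma> (P \<union> {\<tau>, \<sigma>})"
    if \<tau>: "b < \<tau>" "\<tau> < \<sigma>" and P: "small_increments W \<delta> \<tau> P" for \<tau> P
    unfolding small_increments_def
  proof (intro allI impI)
    fix x y assume xy: "0 \<le> x" "x < y" "y \<le> \<sigma>" "{x<..y} \<inter> (P \<union> {\<tau>, \<sigma>}) = {}"
    show "\<bar>W y - W x\<bar> < \<delta>"
    proof (cases "y \<le> \<tau>")
      case True
      then show ?thesis using P xy unfolding small_increments_def by auto
    next
      case False
      then have "\<bar>W x - L\<bar> < \<delta>/2" "\<bar>W y - L\<bar> < \<delta>/2" using b(2) \<tau> xy by auto
      then show ?thesis by linarith
    qed
  qed
  then show ?thesis using b(1) by blast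
qed

lemma cadlag_small_increments_partition:
  assumes cadlag: "cadlag_on T W" and "0 < T" "0 < \<delta>"
  obtains P where "is_partition T P" "small_increments W \<delta> T P"
proof -
  \<comment> \<open>Left limits show that the supremum of S is attained, right-continuity that it is T.\<close>
  define S where "S = {\<tau>. 0 \<le> \<tau> \<and> \<tau> \<le> T \<and> (\<exists>P. finite P \<and> small_increments W \<delta> \<tau> P)}"
  define \<sigma> where "\<sigma> = Sup S"
  have S0: "0 \<in> S"
    unfolding S_def using assms(2) by (auto simp: small_increments_def intro!: exI [of _ "{}"])
  have S_bdd: "bdd_above S" unfolding S_def by (rule bdd_aboveI [of _ T]) auto
  have "0 \<le> \<sigma>" unfolding \<sigma>_def using S0 S_bdd by (rule cSup_upper)
  moreover have "\<sigma> \<le> T" unfolding \<sigma>_def using S0 by (intro cSup_least) (auto simp: S_def)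
  ultimately have \<sigma>: "0 \<le> \<sigma>" "\<sigma> \<le> T" .
  have in_S: "\<sigma> \<in> S"
  proof (cases "\<sigma> = 0")
    case False
    then have "\<sigma> \<in> {0<..T}" using \<sigma> by simp
    then obtain L where L: "(W \<longlongrightarrow> L) (at_left \<sigma>)" using cadlag unfolding cadlag_on_def by blast
    obtain b where b: "b < \<sigma>"
      "\<forall>\<tau> P. b < \<tau> \<longrightarrow> \<tau> < \<sigma> \<longrightarrow> small_increments W \<delta> \<tau> P \<longrightarrow>
         small_increments W \<delta> \<sigma> (P \<union> {\<tau>, \<sigma>})"
      using small_increments_extend_left [OF L assms(3)] by blast
    have "max b 0 < Sup S" using b(1) \<sigma> False unfolding \<sigma>_def by auto
    moreover have "S \<noteq> {}" using S0 by blast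
    ultimately obtain \<tau> where \<tau>: "\<tau> \<in> S" "max b 0 < \<tau>" by (rule less_cSupE)
    then obtain P where P: "finite P" "small_increments W \<delta> \<tau> P" unfolding S_def by blast
    have "\<tau> \<le> \<sigma>" unfolding \<sigma>_def using \<tau>(1) S_bdd by (rule cSup_upper)
    then consider "\<tau> = \<sigma>" | "\<tau> < \<sigma>" by linarith
    then show ?thesis
    proof cases
      case 2
      have "b < \<tau>" using \<tau>(2) by simp
      then have "small_increments W \<delta> \<sigma> (P \<union> {\<tau>, \<sigma>})" using 2 P(2) by (rule b(2) [rule_format])
      moreover have "finite (P \<union> {\<tau>, \<sigma>})" using P(1) by simp
      ultimately show ?thesis using \<sigma> unfolding S_def by blast
    qed (use \<tau> in simp)
  qed (use S0 in simp)
  have "\<sigma> = T"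
  proof (rule ccontr)
    assume "\<sigma> \<noteq> T"
    then have "\<sigma> < T" using \<sigma> by simp
    then have right: "(W \<longlongrightarrow> W \<sigma>) (at_right \<sigma>)" using cadlag \<sigma> unfolding cadlag_on_def by simp
    obtain P where P: "finite P" "small_increments W \<delta> \<sigma> P" using in_S unfolding S_def by blast
    obtain h where h: "0 < h" "small_increments W \<delta> (\<sigma> + h) (insert \<sigma> P)"
      using small_increments_extend_right [OF right assms(3) P(2)] by blast
    have "small_increments W \<delta> (min (\<sigma> + h) T) (insert \<sigma> P)"
      using h(2) by (rule small_increments_mono) auto
    moreover have "finite (insert \<sigma> P)" using P(1) by simp
    moreover have "0 \<le> min (\<sigma> + h) T" "min (\<sigma> + h) T \<le> T" using \<sigma> h(1) assms(2) by auto
    ultimately have "min (\<sigma> + h) T \<in> S"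
      unfolding S_def by blast
    then have "min (\<sigma> + h) T \<le> \<sigma>" unfolding \<sigma>_def using S_bdd by (rule cSup_upper)
    then show False using h(1) \<open>\<sigma> < T\<close> by linarith
  qed
  then obtain P where P: "finite P" "small_increments W \<delta> T P" using in_S unfolding S_def by blast
  show ?thesis
  proof
    show "is_partition T (P \<inter> {0..T} \<union> {0, T})"
      unfolding is_partition_def using P(1) assms(2) by auto
    show "small_increments W \<delta> T (P \<inter> {0..T} \<union> {0, T})"
      unfolding small_increments_def
    proof (intro allI impI)
      fix x y assume xy: "0 \<le> x" "x < y" "y \<le> T" "{x<..y} \<inter> (P \<inter> {0..T} \<union> {0, T}) = {}"
      then have "{x<..y} \<inter> P = {}" by auto
      then show "\<bar>W y - W x\<bar> < \<delta>" by (rule small_incrementsD [OF P(2) xy(1-3)])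
    qed
  qed
qed

lemma left_lim_tendsto:
  assumes "cadlag_on T W" "v \<in> {0<..T}"
  shows "(W \<longlongrightarrow> left_lim W v) (at_left v)"
proof -
  obtain l where l: "(W \<longlongrightarrow> l) (at_left v)" using assms unfolding cadlag_on_def by blast
  then have "left_lim W v = l" unfolding left_lim_def by (rule tendsto_Lim [OF trivial_limit_at_left_real])
  then show ?thesis using l by simp
qed

lemma left_lim_bounds:
  assumes "cadlag_on T W" "v \<in> {0<..T}" "\<forall>t\<in>{0..T}. W t \<in> {m..Mx}"
  shows "m \<le> left_lim W v" "left_lim W v \<le> Mx"
proof -
  have "eventually (\<lambda>s. s \<in> {0<..<v}) (at_left v)"
    using assms(2) by (intro eventually_at_left_real) auto
  then have "eventually (\<lambda>s. m \<le> W s \<and> W s \<le> Mx) (at_left v)"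
    by (rule eventually_mono) (use assms(2,3) in auto)
  then have lower: "eventually (\<lambda>s. m \<le> W s) (at_left v)"
    and upper: "eventually (\<lambda>s. W s \<le> Mx) (at_left v)"
    by (simp_all add: eventually_conj_iff)
  show "m \<le> left_lim W v"
    by (rule tendsto_lowerbound [OF left_lim_tendsto [OF assms(1,2)] lower trivial_limit_at_left_real])
  show "left_lim W v \<le> Mx"
    by (rule tendsto_upperbound [OF left_lim_tendsto [OF assms(1,2)] upper trivial_limit_at_left_real])
qed

lemma jump_le_of_small_increments:
  assumes cadlag: "cadlag_on T W" and P: "is_partition T P" "small_increments W \<delta> T P"
    and v: "v \<in> {0<..T}" "v \<notin> P"
  shows "\<bar>jump W v\<bar> \<le> \<delta>"
proof -
  have fin: "finite {r\<in>P. r < v}" and ne: "{r\<in>P. r < v} \<noteq> {}"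
    using P(1) v unfolding is_partition_def by auto
  define u where "u = Max {r\<in>P. r < v}"
  have u: "u \<in> P" "u < v" "0 \<le> u" using Max_in [OF fin ne] P(1) unfolding u_def is_partition_def by auto
  have "eventually (\<lambda>s. s \<in> {u<..<v}) (at_left v)"
    using u by (intro eventually_at_left_real) auto
  then have "eventually (\<lambda>s. \<bar>W v - W s\<bar> \<le> \<delta>) (at_left v)"
  proof eventually_elim
    case (elim s)
    have "{s<..v} \<inter> P = {}"
    proof (rule ccontr)
      assume "{s<..v} \<inter> P \<noteq> {}"
      then obtain r where r: "r \<in> P" "s < r" "r \<le> v" by auto
      then have "r \<noteq> v" using v(2) by auto
      with r have "r \<le> u" unfolding u_def using fin by (intro Max_ge) auto
      then show False using r elim by auto
    qed
    then have "\<bar>W v - W s\<bar> < \<delta>" using small_incrementsD [OF P(2)] elim u v by simp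
    then show ?case by simp
  qed
  moreover have "((\<lambda>s. \<bar>W v - W s\<bar>) \<longlongrightarrow> \<bar>jump W v\<bar>) (at_left v)"
    unfolding jump_def by (intro tendsto_intros left_lim_tendsto [OF cadlag v(1)])
  ultimately show ?thesis
    using tendsto_upperbound [OF _ _ trivial_limit_at_left_real] by blast
qed

lemma eventually_at_right_0_less: "0 < c \<Longrightarrow> eventually (\<lambda>h. h < c) (at_right (0::real))"
  using order_tendstoD(2) [OF tendsto_ident_at] .

lemma tendsto_at_left_shift:
  fixes v :: real
  assumes "(W \<longlongrightarrow> L) (at_left v)"
  shows "((\<lambda>h. W (v - h)) \<longlongrightarrow> L) (at_right 0)"
proof -
  have "filterlim (\<lambda>h. v - h) (at_left v) (at_right (0::real))"
    unfolding filterlim_at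
  proof
    show "\<forall>\<^sub>F h in at_right 0. v - h \<in> {..<v} \<and> v - h \<noteq> v"
      using eventually_at_right_less [of "0::real"] by eventually_elim auto
    have "((\<lambda>h. v - h) \<longlongrightarrow> v - 0) (at_right (0::real))"
      by (intro tendsto_intros)
    then show "((\<lambda>h. v - h) \<longlongrightarrow> v) (at_right 0)" by simp
  qed
  with assms show ?thesis by (rule filterlim_compose)
qed

lemma sum_increments_before_le:
  assumes V: "\<And>P. is_partition T P \<Longrightarrow> psum T P (\<lambda>s t. \<bar>W t - W s\<bar> powr p) \<le> V"
    and "0 \<le> T" and F: "finite F" "F \<subseteq> {0<..T}"
    and h: "\<And>v. v \<in> F \<Longrightarrow> h < v" "\<And>v w. v \<in> F \<Longrightarrow> w \<in> F \<Longrightarrow> v \<noteq> w \<Longrightarrow> h < \<bar>v - w\<bar>" "0 < h"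
  shows "(\<Sum>v\<in>F. \<bar>W v - W (v - h)\<bar> powr p) \<le> V"
proof -
  define P where "P = {0, T} \<union> F \<union> (\<lambda>v. v - h) ` F"
  have "v - h \<in> {0..T}" if "v \<in> F" for v
    using that F h(1) [OF that] h(3) by auto
  then have P: "is_partition T P"
    unfolding is_partition_def P_def using assms(2) F by auto
  have nxt_shift: "nxt P (v - h) = v" if v: "v \<in> F" for v
  proof (rule nxt_eqI)
    show "finite P" "v \<in> P" "v - h < v" using F v h(3) unfolding P_def by auto
    fix r assume r: "r \<in> P" "v - h < r"
    show "v \<le> r"
    proof (rule ccontr)
      assume "\<not> v \<le> r"
      then have near: "\<bar>v - r\<bar> < h" using r(2) by simp
      consider "r = 0" | "r = T" | "r \<in> F" | w where "w \<in> F" "r = w - h"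
        using r(1) unfolding P_def by auto
      then show False
      proof cases
        case 1 then show False using near h(1) [OF v] by simp
      next
        case 2 then show False using \<open>\<not> v \<le> r\<close> v F by auto
      next
        case 3 then show False using near h(2) [OF v 3] \<open>\<not> v \<le> r\<close> by force
      next
        case 4 then show False using near h(2) [OF v 4(1)] \<open>\<not> v \<le> r\<close> r(2) by force
      qed
    qed
  qed
  have "(\<Sum>v\<in>F. \<bar>W v - W (v - h)\<bar> powr p) = (\<Sum>s\<in>(\<lambda>v. v - h) ` F. \<bar>W (nxt P s) - W s\<bar> powr p)"
    by (subst sum.reindex) (auto simp: inj_on_def nxt_shift intro!: sum.cong)
  also have "\<dots> \<le> (\<Sum>s\<in>P - {T}. \<bar>W (nxt P s) - W s\<bar> powr p)"
    using F h(3) by (intro sum_mono2) (auto simp: P_def)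
  also have "\<dots> \<le> V" using V [OF P] unfolding psum_def .
  finally show ?thesis .
qed

lemma jump_powr_sum_le:
  assumes cadlag: "cadlag_on T W" and "0 \<le> T" "0 < p"
    and V: "\<And>P. is_partition T P \<Longrightarrow> psum T P (\<lambda>s t. \<bar>W t - W s\<bar> powr p) \<le> V"
    and F: "finite F" "F \<subseteq> {0<..T}"
  shows "(\<Sum>v\<in>F. \<bar>jump W v\<bar> powr p) \<le> V"
proof (rule tendsto_upperbound)
  show "((\<lambda>h. \<Sum>v\<in>F. \<bar>W v - W (v - h)\<bar> powr p) \<longlongrightarrow> (\<Sum>v\<in>F. \<bar>jump W v\<bar> powr p)) (at_right 0)"
  proof (intro tendsto_sum)
    fix v assume "v \<in> F"
    then have "(W \<longlongrightarrow> left_lim W v) (at_left v)" using F by (intro left_lim_tendsto [OF cadlag]) auto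
    then have "((\<lambda>h. \<bar>W v - W (v - h)\<bar>) \<longlongrightarrow> \<bar>jump W v\<bar>) (at_right 0)"
      unfolding jump_def by (intro tendsto_intros tendsto_at_left_shift)
    then show "((\<lambda>h. \<bar>W v - W (v - h)\<bar> powr p) \<longlongrightarrow> \<bar>jump W v\<bar> powr p) (at_right 0)"
      using assms(3) by (intro tendsto_powr') auto
  qed
  have "eventually (\<lambda>h. \<forall>v\<in>F. h < v) (at_right 0)"
    using F by (intro eventually_ball_finite ballI eventually_at_right_0_less) auto
  moreover have "eventually (\<lambda>h. \<forall>v\<in>F. \<forall>w\<in>F. v \<noteq> w \<longrightarrow> h < \<bar>v - w\<bar>) (at_right 0)"
    using F by (intro eventually_ball_finite ballI) (auto intro: eventually_at_right_0_less)
  ultimately show "eventually (\<lambda>h. (\<Sum>v\<in>F. \<bar>W v - W (v - h)\<bar> powr p) \<le> V) (at_right 0)"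
    using eventually_at_right_less [of "0::real"]
  proof eventually_elim
    case (elim h)
    then show ?case by (intro sum_increments_before_le [OF V assms(2) F]) auto
  qed
qed (rule trivial_limit_at_right_real)

section \<open>Bounded positive cadlag paths of finite p-variation\<close>

locale bounded_positive_cadlag =
  fixes T p m Mx :: real and W :: "real \<Rightarrow> real" and n :: nat
  assumes T_pos: "0 < T" and p_pos: "0 < p" and p_less: "p < real n + 1"
    and cadlag: "cadlag_on T W" and pvar_finite: "finite_pvar p T W"
    and m_pos: "0 < m" and range: "\<forall>t\<in>{0..T}. W t \<in> {m..Mx}"
begin

abbreviation Vp :: real where "Vp \<equiv> pvar p T W powr p"

definition incr_rem :: "real \<Rightarrow> real \<Rightarrow> real" where
  "incr_rem s t = logser_rem n ((W t - W s) / W s)"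

definition rem_factor :: "real \<Rightarrow> real" where
  "rem_factor \<delta> = (\<delta>/m) powr (real n + 1 - p) / ((m/Mx) * m powr p)"

definition rem_lipschitz :: real where
  "rem_lipschitz = Mx/m^2 * ((Mx/m)^n / (m/Mx))"

lemma W_bounds: "t \<in> {0..T} \<Longrightarrow> m \<le> W t \<and> W t \<le> Mx"
  using range by auto

lemma left_lim_W_bounds: "v \<in> {0<..T} \<Longrightarrow> m \<le> left_lim W v \<and> left_lim W v \<le> Mx"
  using left_lim_bounds [OF cadlag _ range] by auto

lemma m_le_Mx: "m \<le> Mx"
  using W_bounds [of 0] T_pos by auto

lemma psum_le_Vp: "is_partition T P \<Longrightarrow> psum T P (\<lambda>s t. \<bar>W t - W s\<bar> powr p) \<le> Vp"
  using psum_le_pvar_powr [OF pvar_finite p_pos] .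

lemma rem_factor_nonneg: "0 \<le> rem_factor \<delta>"
  unfolding rem_factor_def using m_pos m_le_Mx by simp

lemma rem_lipschitz_nonneg: "0 \<le> rem_lipschitz"
  unfolding rem_lipschitz_def using m_pos m_le_Mx by simp

lemma rem_factor_tendsto_0: "(rem_factor \<longlongrightarrow> 0) (at_right 0)"
proof -
  have "((\<lambda>\<delta>. (\<delta>/m) powr (real n + 1 - p)) \<longlongrightarrow> (0/m) powr (real n + 1 - p)) (at_right 0)"
    using m_pos p_less eventually_at_right_less [of "0::real"]
    by (intro tendsto_powr' tendsto_intros) (auto elim: eventually_mono)
  then have "((\<lambda>\<delta>. (\<delta>/m) powr (real n + 1 - p)) \<longlongrightarrow> 0) (at_right 0)" by simp
  then have "((\<lambda>\<delta>. (\<delta>/m) powr (real n + 1 - p) * (Mx / (m * m powr p))) \<longlongrightarrow> 0) (at_right 0)"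
    by (rule tendsto_mult_left_zero)
  then show ?thesis
    unfolding rem_factor_def [abs_def] by (simp add: field_simps)
qed

lemma jump_corr_eq: "jump_corr n W v = logser_rem n ((W v - left_lim W v) / left_lim W v)"
  by (simp add: jump_corr_def logser_rem_def jump_def)

lemma abs_incr_rem_le:
  assumes "s \<in> {0..T}" "t \<in> {0..T}" "\<bar>W t - W s\<bar> \<le> \<delta>"
  shows "\<bar>incr_rem s t\<bar> \<le> rem_factor \<delta> * \<bar>W t - W s\<bar> powr p"
proof -
  have "m \<le> W s" "W s \<le> Mx" "m \<le> W t" "W t \<le> Mx" using W_bounds assms(1,2) by auto
  from logser_rem_increment_ratio_le [OF m_pos this assms(3) p_pos p_less]
  show ?thesis unfolding incr_rem_def rem_factor_def .
qed

lemma abs_jump_corr_le: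
  assumes "v \<in> {0<..T}" "\<bar>jump W v\<bar> \<le> \<delta>"
  shows "\<bar>jump_corr n W v\<bar> \<le> rem_factor \<delta> * \<bar>jump W v\<bar> powr p"
proof -
  have "m \<le> left_lim W v" "left_lim W v \<le> Mx" "m \<le> W v" "W v \<le> Mx"
    using left_lim_W_bounds W_bounds assms(1) by auto
  from logser_rem_increment_ratio_le [OF m_pos this _ p_pos p_less] assms(2)
  show ?thesis unfolding jump_corr_eq rem_factor_def jump_def by simp
qed

lemma incr_rem_near_jump_corr:
  assumes "s \<in> {0..T}" "v \<in> {0<..T}"
  shows "\<bar>incr_rem s v - jump_corr n W v\<bar> \<le> rem_lipschitz * \<bar>W s - left_lim W v\<bar>"
proof -
  have "m \<le> W s" "W s \<le> Mx" "m \<le> W v" "W v \<le> Mx" "m \<le> left_lim W v" "left_lim W v \<le> Mx"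
    using left_lim_W_bounds W_bounds assms by auto
  from logser_rem_increment_ratio_lipschitz [OF m_pos this]
  show ?thesis unfolding incr_rem_def jump_corr_eq rem_lipschitz_def by (simp add: abs_minus_commute)
qed

lemma sum_abs_jump_corr_le:
  assumes "finite F" "F \<subseteq> {0<..T}" "\<And>v. v \<in> F \<Longrightarrow> \<bar>jump W v\<bar> \<le> \<delta>"
  shows "(\<Sum>v\<in>F. \<bar>jump_corr n W v\<bar>) \<le> rem_factor \<delta> * Vp"
proof -
  have "(\<Sum>v\<in>F. \<bar>jump_corr n W v\<bar>) \<le> (\<Sum>v\<in>F. rem_factor \<delta> * \<bar>jump W v\<bar> powr p)"
    using assms(2,3) by (intro sum_mono abs_jump_corr_le) auto
  also have "\<dots> = rem_factor \<delta> * (\<Sum>v\<in>F. \<bar>jump W v\<bar> powr p)"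
    by (simp add: sum_distrib_left)
  also have "\<dots> \<le> rem_factor \<delta> * Vp"
    using T_pos by (intro mult_left_mono rem_factor_nonneg jump_powr_sum_le [OF cadlag _ p_pos psum_le_Vp assms(1,2)]) auto
  finally show ?thesis .
qed

lemma abs_jump_le_Mx: "v \<in> {0<..T} \<Longrightarrow> \<bar>jump W v\<bar> \<le> Mx"
  using W_bounds [of v] left_lim_W_bounds [of v] m_pos by (auto simp: jump_def)

lemma jump_corr_abs_summable: "(\<lambda>t. \<bar>jump_corr n W t\<bar>) summable_on {0<..T}"
proof (rule nonneg_bdd_above_summable_on)
  show "bdd_above (sum (\<lambda>t. \<bar>jump_corr n W t\<bar>) ` {F. F \<subseteq> {0<..T} \<and> finite F})"
    using sum_abs_jump_corr_le abs_jump_le_Mx by (intro bdd_aboveI [of _ "rem_factor Mx * Vp"]) blast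
qed simp

lemma jump_corr_summable: "jump_corr n W summable_on E" if "E \<subseteq> {0<..T}"
  using abs_summable_summable [of "jump_corr n W"] summable_on_subset_banach [OF jump_corr_abs_summable that]
  by simp

lemma abs_infsum_jump_corr_le:
  assumes "E \<subseteq> {0<..T}" "\<And>v. v \<in> E \<Longrightarrow> \<bar>jump W v\<bar> \<le> \<delta>"
  shows "\<bar>infsum (jump_corr n W) E\<bar> \<le> rem_factor \<delta> * Vp"
proof -
  have summable: "(\<lambda>t. \<bar>jump_corr n W t\<bar>) summable_on E"
    by (rule summable_on_subset_banach [OF jump_corr_abs_summable assms(1)])
  have "\<bar>infsum (jump_corr n W) E\<bar> \<le> (\<Sum>\<^sub>\<infinity>t\<in>E. \<bar>jump_corr n W t\<bar>)"
    using norm_infsum_bound [of "jump_corr n W" E] summable by simp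
  also have "\<dots> \<le> rem_factor \<delta> * Vp"
    using assms by (intro infsum_le_finite_sums [OF summable] sum_abs_jump_corr_le) auto
  finally show ?thesis .
qed

lemma left_lim_uniform_approach:
  assumes "finite J" "J \<subseteq> {0<..T}" "0 < \<epsilon>"
  shows "\<exists>\<eta>>0. \<forall>v\<in>J. \<eta> < v \<and> (\<forall>s. v - \<eta> \<le> s \<longrightarrow> s < v \<longrightarrow> \<bar>W s - left_lim W v\<bar> < \<epsilon>)"
proof -
  have "eventually (\<lambda>\<eta>. \<eta> < v \<and> (\<forall>s. v - \<eta> \<le> s \<longrightarrow> s < v \<longrightarrow> \<bar>W s - left_lim W v\<bar> < \<epsilon>)) (at_right 0)"
    if v: "v \<in> J" for v
  proof -
    have "eventually (\<lambda>s. dist (W s) (left_lim W v) < \<epsilon>) (at_left v)"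
      using left_lim_tendsto [OF cadlag] v assms(2,3) by (intro tendstoD) auto
    then obtain b where b: "b < v" "\<And>s. b < s \<Longrightarrow> s < v \<Longrightarrow> \<bar>W s - left_lim W v\<bar> < \<epsilon>"
      unfolding eventually_at_left_field dist_real_def by auto
    have "0 < v" "0 < v - b" using v assms(2) b(1) by auto
    then have "eventually (\<lambda>\<eta>. \<eta> < v) (at_right 0)" "eventually (\<lambda>\<eta>. \<eta> < v - b) (at_right 0)"
      by (simp_all add: eventually_at_right_0_less)
    then show ?thesis
    proof eventually_elim
      case (elim \<eta>)
      then show ?case using b(2) by force
    qed
  qed
  then have "eventually (\<lambda>\<eta>. 0 < \<eta> \<and> (\<forall>v\<in>J. \<eta> < v \<and>
      (\<forall>s. v - \<eta> \<le> s \<longrightarrow> s < v \<longrightarrow> \<bar>W s - left_lim W v\<bar> < \<epsilon>))) (at_right 0)"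
    using eventually_at_right_less [of "0::real"] assms(1)
    by (simp add: eventually_conj_iff eventually_ball_finite)
  then show ?thesis
    using eventually_happens' [OF trivial_limit_at_right_real] by blast
qed

lemma psum_incr_rem_split:
  assumes P: "is_partition T P" and J: "J \<subseteq> P - {0}"
  defines "A \<equiv> {s \<in> P - {T}. nxt P s \<in> J}" and "B \<equiv> {s \<in> P - {T}. nxt P s \<notin> J}"
  shows "psum T P incr_rem - infsum (jump_corr n W) {0<..T} =
           (\<Sum>s\<in>A. incr_rem s (nxt P s) - jump_corr n W (nxt P s)) + (\<Sum>s\<in>B. incr_rem s (nxt P s))
           - infsum (jump_corr n W) ({0<..T} - J)"
proof -
  have fin: "finite P" and J_sub: "J \<subseteq> {0<..T}"
    using P J unfolding is_partition_def by (auto simp: subset_iff less_le)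
  have "bij_betw (nxt P) A J"
    unfolding A_def by (rule bij_betw_nxt_preimage [OF P J])
  then have sum_A: "(\<Sum>s\<in>A. jump_corr n W (nxt P s)) = (\<Sum>v\<in>J. jump_corr n W v)"
    by (rule sum.reindex_bij_betw)
  have "A \<union> B = P - {T}" "A \<inter> B = {}" "finite A" "finite B"
    using fin unfolding A_def B_def by auto
  then have sum_AB: "psum T P incr_rem = (\<Sum>s\<in>A. incr_rem s (nxt P s)) + (\<Sum>s\<in>B. incr_rem s (nxt P s))"
    unfolding psum_def by (metis sum.union_disjoint)
  have "infsum (jump_corr n W) {0<..T} = infsum (jump_corr n W) (J \<union> ({0<..T} - J))"
    using J_sub by (simp add: Un_absorb1)
  also have "\<dots> = (\<Sum>v\<in>J. jump_corr n W v) + infsum (jump_corr n W) ({0<..T} - J)"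
    using J_sub fin finite_subset [OF J] by (subst infsum_Un_disjoint) (auto intro: jump_corr_summable)
  finally show ?thesis
    unfolding sum_AB sum_subtractf sum_A by simp
qed

lemma abs_sum_small_incr_rem_le:
  assumes P: "is_partition T P" and B: "B \<subseteq> P - {T}"
    and small: "\<And>s. s \<in> B \<Longrightarrow> \<bar>W (nxt P s) - W s\<bar> \<le> \<delta>"
  shows "\<bar>\<Sum>s\<in>B. incr_rem s (nxt P s)\<bar> \<le> rem_factor \<delta> * Vp"
proof -
  have fin: "finite P" "P \<subseteq> {0..T}" using P unfolding is_partition_def by auto
  have in_T: "s \<in> {0..T}" "nxt P s \<in> {0..T}" if "s \<in> B" for s
  proof -
    have s: "s \<in> P - {T}" using that B by auto
    then have "nxt P s \<in> P" using nxt_partition(1) [OF P _ is_partition_less_end [OF P s]] by simp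
    then show "s \<in> {0..T}" "nxt P s \<in> {0..T}" using s fin(2) by auto
  qed
  have "\<bar>\<Sum>s\<in>B. incr_rem s (nxt P s)\<bar> \<le> (\<Sum>s\<in>B. rem_factor \<delta> * \<bar>W (nxt P s) - W s\<bar> powr p)"
    using in_T small by (intro order_trans [OF sum_abs] sum_mono abs_incr_rem_le) auto
  also have "\<dots> = rem_factor \<delta> * (\<Sum>s\<in>B. \<bar>W (nxt P s) - W s\<bar> powr p)"
    by (simp add: sum_distrib_left)
  also have "(\<Sum>s\<in>B. \<bar>W (nxt P s) - W s\<bar> powr p) \<le> psum T P (\<lambda>s t. \<bar>W t - W s\<bar> powr p)"
    unfolding psum_def using fin(1) B by (intro sum_mono2) auto
  finally show ?thesis
    using psum_le_Vp [OF P] rem_factor_nonneg by (meson mult_left_mono order_trans)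
qed

lemma abs_psum_incr_rem_minus_infsum_le:
  assumes P1: "is_partition T P1" "small_increments W \<delta> T P1"
    and \<eta>: "0 < \<eta>" "\<And>v s. v \<in> P1 - {0} \<Longrightarrow> v - \<eta> \<le> s \<Longrightarrow> s < v \<Longrightarrow> \<bar>W s - left_lim W v\<bar> < \<delta>'"
    and P: "is_partition T P" "P1 \<subseteq> P" "(\<lambda>v. v - \<eta>) ` (P1 - {0}) \<subseteq> P"
  shows "\<bar>psum T P incr_rem - infsum (jump_corr n W) {0<..T}\<bar>
           \<le> rem_lipschitz * card (P1 - {0}) * \<delta>' + 2 * (rem_factor \<delta> * Vp)"
proof -
  define J where "J = P1 - {0}"
  define A where "A = {s \<in> P - {T}. nxt P s \<in> J}"
  define B where "B = {s \<in> P - {T}. nxt P s \<notin> J}"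
  have J: "J \<subseteq> P - {0}" "J \<subseteq> {0<..T}" "finite J"
    using P1(1) P(2) unfolding J_def is_partition_def by (auto simp: subset_iff less_le)
  have step: "s \<in> {0..T}" "nxt P s \<in> P" "s < nxt P s" "nxt P s \<le> T"
    "\<And>r. r \<in> P \<Longrightarrow> s < r \<Longrightarrow> nxt P s \<le> r" if "s \<in> P - {T}" for s
    using that nxt_partition [OF P(1) _ is_partition_less_end [OF P(1) that]] P(1)
    unfolding is_partition_def by auto
  have near: "\<bar>\<Sum>s\<in>A. incr_rem s (nxt P s) - jump_corr n W (nxt P s)\<bar> \<le> rem_lipschitz * card J * \<delta>'"
  proof -
    have "\<bar>incr_rem s (nxt P s) - jump_corr n W (nxt P s)\<bar> \<le> rem_lipschitz * \<delta>'" if s: "s \<in> A" for s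
    proof -
      define v where "v = nxt P s"
      have s': "s \<in> P - {T}" and v: "v \<in> J" using s unfolding A_def v_def by auto
      have "v - \<eta> \<in> P" using v P(3) unfolding J_def by auto
      then have "v - \<eta> \<le> s" using step(5) [OF s', of "v - \<eta>"] \<eta>(1) unfolding v_def by force
      then have close: "\<bar>W s - left_lim W v\<bar> < \<delta>'" using \<eta>(2) v step(3) [OF s'] unfolding J_def v_def by blast
      have "\<bar>incr_rem s v - jump_corr n W v\<bar> \<le> rem_lipschitz * \<bar>W s - left_lim W v\<bar>"
        using step(1) [OF s'] v J(2) by (intro incr_rem_near_jump_corr) auto
      also have "\<dots> \<le> rem_lipschitz * \<delta>'"
        using close by (intro mult_left_mono rem_lipschitz_nonneg) simp
      finally show ?thesis unfolding v_def .
    qed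
    then have "\<bar>\<Sum>s\<in>A. incr_rem s (nxt P s) - jump_corr n W (nxt P s)\<bar> \<le> (\<Sum>s\<in>A. rem_lipschitz * \<delta>')"
      by (intro order_trans [OF sum_abs] sum_mono) auto
    also have "(\<Sum>s\<in>A. rem_lipschitz * \<delta>') = rem_lipschitz * card J * \<delta>'"
      using bij_betw_same_card [OF bij_betw_nxt_preimage [OF P(1) J(1)]] unfolding A_def by simp
    finally show ?thesis .
  qed
  have far: "\<bar>\<Sum>s\<in>B. incr_rem s (nxt P s)\<bar> \<le> rem_factor \<delta> * Vp"
  proof (rule abs_sum_small_incr_rem_le [OF P(1)])
    fix s assume s: "s \<in> B"
    then have s': "s \<in> P - {T}" and t: "nxt P s \<notin> J" unfolding B_def by auto
    have "{s<..nxt P s} \<inter> P1 = {}"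
    proof (rule ccontr)
      assume "{s<..nxt P s} \<inter> P1 \<noteq> {}"
      then obtain r where r: "r \<in> P1" "s < r" "r \<le> nxt P s" by auto
      then have "r = nxt P s" using step(5) [OF s', of r] P(2) by force
      then show False using r t step(1) [OF s'] unfolding J_def by auto
    qed
    then show "\<bar>W (nxt P s) - W s\<bar> \<le> \<delta>"
      using small_incrementsD [OF P1(2)] step [OF s'] by (meson atLeastAtMost_iff less_imp_le)
  qed (auto simp: B_def)
  have rest: "\<bar>infsum (jump_corr n W) ({0<..T} - J)\<bar> \<le> rem_factor \<delta> * Vp"
  proof (rule abs_infsum_jump_corr_le)
    fix v assume "v \<in> {0<..T} - J"
    then show "\<bar>jump W v\<bar> \<le> \<delta>"
      using jump_le_of_small_increments [OF cadlag P1] unfolding J_def by auto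
  qed auto
  show ?thesis
    using psum_incr_rem_split [OF P(1) J(1)] near far rest unfolding A_def B_def J_def
    by linarith
qed

lemma rrs_converges_psum_incr_rem:
  "rrs_converges T (\<lambda>P. psum T P incr_rem) (infsum (jump_corr n W) {0<..T})"
  unfolding rrs_converges_def
proof (intro allI impI)
  fix \<epsilon> :: real assume \<epsilon>: "0 < \<epsilon>"
  have "((\<lambda>\<delta>. rem_factor \<delta> * Vp) \<longlongrightarrow> 0) (at_right 0)"
    using rem_factor_tendsto_0 by (rule tendsto_mult_left_zero)
  then have "eventually (\<lambda>\<delta>. rem_factor \<delta> * Vp < \<epsilon>/3) (at_right 0)"
    using \<epsilon> by (intro order_tendstoD(2)) auto
  then have "eventually (\<lambda>\<delta>. 0 < \<delta> \<and> rem_factor \<delta> * Vp < \<epsilon>/3) (at_right 0)"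
    using eventually_at_right_less [of "0::real"] by (simp add: eventually_conj_iff)
  then obtain \<delta> where \<delta>: "0 < \<delta>" "rem_factor \<delta> * Vp < \<epsilon>/3"
    using eventually_happens' [OF trivial_limit_at_right_real] by blast
  obtain P1 where P1: "is_partition T P1" "small_increments W \<delta> T P1"
    by (rule cadlag_small_increments_partition [OF cadlag T_pos \<delta>(1)])
  define J where "J = P1 - {0}"
  have J: "finite J" "J \<subseteq> {0<..T}"
    using P1(1) unfolding J_def is_partition_def by (auto simp: subset_iff less_le)
  have "((\<lambda>d. rem_lipschitz * card J * d) \<longlongrightarrow> rem_lipschitz * card J * 0) (at_right 0)"
    by (intro tendsto_intros)
  then have "eventually (\<lambda>d. rem_lipschitz * card J * d < \<epsilon>/3) (at_right 0)"
    using \<epsilon> by (intro order_tendstoD(2)) auto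
  then have "eventually (\<lambda>d. 0 < d \<and> rem_lipschitz * card J * d < \<epsilon>/3) (at_right 0)"
    using eventually_at_right_less [of "0::real"] by (simp add: eventually_conj_iff)
  then obtain \<delta>' where \<delta>': "0 < \<delta>'" and near_small: "rem_lipschitz * card J * \<delta>' < \<epsilon>/3"
    using eventually_happens' [OF trivial_limit_at_right_real] by blast
  obtain \<eta> where \<eta>: "0 < \<eta>" "\<forall>v\<in>J. \<eta> < v \<and> (\<forall>s. v - \<eta> \<le> s \<longrightarrow> s < v \<longrightarrow> \<bar>W s - left_lim W v\<bar> < \<delta>')"
    using left_lim_uniform_approach [OF J \<delta>'] by blast
  \<comment> \<open>J contains every time at which W jumps by more than \<delta>; the points v - \<eta> make every refining partition
    interval ending at v \<in> J start where W is within \<delta>' of its left limit at v.\<close>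
  define P\<epsilon> where "P\<epsilon> = P1 \<union> (\<lambda>v. v - \<eta>) ` J"
  have "(\<lambda>v. v - \<eta>) ` J \<subseteq> {0..T}" using J(2) \<eta> by force
  then have "is_partition T P\<epsilon>" using P1(1) J(1) unfolding P\<epsilon>_def is_partition_def by auto
  moreover have "\<bar>psum T P incr_rem - infsum (jump_corr n W) {0<..T}\<bar> < \<epsilon>"
    if P: "is_partition T P" "P\<epsilon> \<subseteq> P" for P
  proof -
    have "\<bar>psum T P incr_rem - infsum (jump_corr n W) {0<..T}\<bar>
            \<le> rem_lipschitz * card J * \<delta>' + 2 * (rem_factor \<delta> * Vp)"
      using P \<eta>(2) unfolding J_def P\<epsilon>_def
      by (intro abs_psum_incr_rem_minus_infsum_le [OF P1 \<eta>(1)]) auto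
    then show ?thesis using near_small \<delta>(2) by linarith
  qed
  ultimately show "\<exists>P\<epsilon>. is_partition T P\<epsilon> \<and> (\<forall>P. is_partition T P \<and> P\<epsilon> \<subseteq> P \<longrightarrow>
      \<bar>psum T P incr_rem - infsum (jump_corr n W) {0<..T}\<bar> < \<epsilon>)"
    by blast
qed

lemma psum_logser_eq:
  assumes P: "is_partition T P"
  shows "psum T P (\<lambda>s t. logser n ((W t - W s) / W s)) = (ln (W T) - ln (W 0)) - psum T P incr_rem"
proof -
  have pos: "0 < W t" if "t \<in> P" for t
    using that P W_bounds m_pos unfolding is_partition_def by force
  have "psum T P (\<lambda>s t. logser n ((W t - W s) / W s)) = psum T P (\<lambda>s t. (ln (W t) - ln (W s)) - incr_rem s t)"
    unfolding psum_def
  proof (intro sum.cong refl)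
    fix s assume s: "s \<in> P - {T}"
    then have "0 < W s" "0 < W (nxt P s)"
      using pos nxt_partition(1) [OF P _ is_partition_less_end [OF P s]] by auto
    then have "ln (1 + (W (nxt P s) - W s) / W s) = ln (W (nxt P s)) - ln (W s)"
      by (simp add: field_simps ln_div)
    then show "logser n ((W (nxt P s) - W s) / W s) = ln (W (nxt P s)) - ln (W s) - incr_rem s (nxt P s)"
      unfolding incr_rem_def logser_rem_def by simp
  qed
  also have "\<dots> = psum T P (\<lambda>s t. ln (W t) - ln (W s)) - psum T P incr_rem"
    unfolding psum_def by (simp add: sum_subtractf)
  finally show ?thesis unfolding psum_telescope [OF P T_pos] .
qed

lemma ln_increment_decomposition:
  "\<exists>K. rrs_converges T (\<lambda>P. psum T P (\<lambda>s t. logser n ((W t - W s) / W s))) K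
     \<and> ((\<lambda>t. \<bar>jump_corr n W t\<bar>) summable_on {0<..T})
     \<and> ln (W T) - ln (W 0) = K + (\<Sum>\<^sub>\<infinity>t\<in>{0<..T}. jump_corr n W t)"
proof (intro exI conjI)
  show "rrs_converges T (\<lambda>P. psum T P (\<lambda>s t. logser n ((W t - W s) / W s)))
          (ln (W T) - ln (W 0) - infsum (jump_corr n W) {0<..T})"
    using rrs_converges_psum_incr_rem psum_logser_eq by (rule rrs_converges_diff_const)
qed (simp_all add: jump_corr_abs_summable)

end

theorem proposition4p5:
  fixes M :: "'a measure" and W :: "'a \<Rightarrow> real \<Rightarrow> real" and p T :: real
  assumes "prob_space M"
    and "1 \<le> p" and "0 < T"
    and "AE \<omega> in M. cadlag_on T (W \<omega>) \<and> (\<forall>t\<in>{0..T}. 0 < W \<omega> t)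
                     \<and> finite_pvar p T (W \<omega>)"
    and "AE \<omega> in M. \<exists>m Mx. 0 < m \<and> m \<le> Mx \<and> W \<omega> ` {0..T} \<subseteq> {m..Mx}"
  shows "AE \<omega> in M.
           \<exists>K. rrs_converges T
                  (\<lambda>P. psum T P (\<lambda>s t. logser (nat \<lfloor>p\<rfloor>) ((W \<omega> t - W \<omega> s) / W \<omega> s))) K
             \<and> ((\<lambda>t. \<bar>jump_corr (nat \<lfloor>p\<rfloor>) (W \<omega>) t\<bar>) summable_on {0<..T})
             \<and> ln (W \<omega> T) - ln (W \<omega> 0) =
                 K + (\<Sum>\<^sub>\<infinity>t\<in>{0<..T}. jump_corr (nat \<lfloor>p\<rfloor>) (W \<omega>) t)"
  using assms(4,5)
proof eventually_elim
  case (elim \<omega>)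
  then obtain m Mx where "0 < m" "W \<omega> ` {0..T} \<subseteq> {m..Mx}" by blast
  moreover have "p < real (nat \<lfloor>p\<rfloor>) + 1" using assms(2) by linarith
  ultimately interpret bounded_positive_cadlag T p m Mx "W \<omega>" "nat \<lfloor>p\<rfloor>"
    using elim assms(2,3) by unfold_locales auto
  show ?case by (rule ln_increment_decomposition)
qed

end
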